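(* Suppose $1/2\le\sigma<1$, and let $K(x+iy)$ be an analytic function in the closed horizontal strip $\sigma-2\le y\le 0$ satisfying \[ \max_{\sigma-2\le y\le 0}|K(x+iy)| = O\!\left(\frac{1}{|x|^2}\right)\quad\text{as } |x|\to\infty. \] Then for every real $t$, \[ \int_{-\infty}^{\infty}\zeta(\sigma+i(t+u))K(u)\,du = \sum_{n=1}^{\infty}\widehat{K}(\log n)\,n^{-\sigma-it} - 2\pi K\big(-t-i(1-\sigma)\big). \]
   Context: The Fourier transform is $\widehat{K}(\xi):=\int_{-\infty}^{\infty}K(x)e^{-ix\xi}\,dx$ for real $\xi$. $\zeta$ is the Riemann zeta function. *)

theory Defs
  imports "HOL-Complex_Analysis.Complex_Analysis"
begin

text \<open>Riemann zeta function on the half-plane Re s > 0 (s \<noteq> 1), via the classical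
  analytic continuation
  zeta s = s/(s-1) - s * integral over [1,\<infinity>) of frac x * x powr (-s-1).
  For Re s > 1 this agrees with the Dirichlet series; it is only used here for
  1/2 \<le> Re s < 1.\<close>
definition zeta :: "complex \<Rightarrow> complex" where
  "zeta s = s / (s - 1)
     - s * integral {1..} (\<lambda>x::real. complex_of_real (frac x) * complex_of_real x powr (- s - 1))"

definition fourier :: "(complex \<Rightarrow> complex) \<Rightarrow> real \<Rightarrow> complex" where
  "fourier K \<xi> = integral UNIV (\<lambda>x::real. K (complex_of_real x) * exp (- \<i> * complex_of_real (x * \<xi>)))"

end

theory Submission
  imports Defs "HOL-Probability.Sinc_Integral"
begin

text \<open>
  Put \<open>s = \<sigma> + i(t + u)\<close>. As a function of \<open>u\<close>, \<open>zeta s * K u\<close> is holomorphic on the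
  strip \<open>\<sigma> - 2 \<le> Im u \<le> 0\<close> except for a simple pole at \<open>u0 = -t - i(1 - \<sigma>)\<close>, where
  \<open>s = 1\<close>; there \<open>zeta s \<sim> 1/(s - 1) = -i/(u - u0)\<close>, so the residue contributes
  \<open>2\<pi> K u0\<close>. Moving the line of integration from \<open>Im u = 0\<close> down to \<open>Im u = \<sigma> - 2\<close>
  (where \<open>Re s = 2\<close>) is legitimate because \<open>zeta\<close> grows at most linearly in vertical strips
  while \<open>K\<close> decays like \<open>1/x\<^sup>2\<close>. On the lower line \<open>zeta\<close> is its Dirichlet series, which
  can be integrated termwise by dominated convergence; each term \<open>n powr -s * K u\<close> has no
  pole, and shifting it back to the real line turns its integral into the Fourier
  coefficient \<open>fourier K (ln n) * n powr (-\<sigma> - i t)\<close>.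

  The facts about \<open>zeta\<close> used here (holomorphy of \<open>(s - 1) * zeta s\<close> for \<open>Re s > 0\<close>, linear
  growth in \<open>Im s\<close>, the Dirichlet series for \<open>Re s > 1\<close>) all follow from the defining formula
  \<open>zeta s = s/(s - 1) - s * \<integral>\<^sub>1\<^sup>\<infinity> frac x * x powr (-s - 1) dx\<close> by splitting its integral
  over the unit intervals \<open>[k, k + 1]\<close>, on which \<open>frac x = x - k\<close>.
\<close>

lemma has_integral_UNIV_real_tail:
  fixes f :: "real \<Rightarrow> 'a::banach"
  assumes "(f has_integral L) UNIV" "e > 0"
  obtains R where "\<And>a b. a \<le> -R \<Longrightarrow> R \<le> b \<Longrightarrow> norm (integral {a..b} f - L) < e"
proof -
  have "\<exists>B>0. \<forall>a b. ball 0 B \<subseteq> {a..b} \<longrightarrow> norm (integral {a..b} f - L) < e"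
    using assms unfolding has_integral_alt'[of f L UNIV] by simp
  then obtain B where B: "\<And>a b. ball 0 B \<subseteq> {a..b} \<Longrightarrow> norm (integral {a..b} f - L) < e"
    by blast
  show thesis
  proof (rule that)
    fix a b :: real assume "a \<le> -B" "B \<le> b"
    then have "ball 0 B \<subseteq> {a..b}"
      by (auto simp: dist_real_def)
    then show "norm (integral {a..b} f - L) < e"
      using B by simp
  qed
qed

lemma has_integral_UNIV_realI:
  fixes f :: "real \<Rightarrow> 'a::banach"
  assumes "\<And>e. e > 0 \<Longrightarrow> \<exists>R. \<forall>a b. a \<le> -R \<longrightarrow> R \<le> b \<longrightarrow>
             f integrable_on {a..b} \<and> norm (integral {a..b} f - L) < e"
  shows "(f has_integral L) UNIV"
  unfolding has_integral_alt'[of f L UNIV]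
proof (intro conjI allI impI)
  fix a b :: real
  obtain R where "\<forall>a b. a \<le> -R \<longrightarrow> R \<le> b \<longrightarrow> f integrable_on {a..b}"
    using assms[of 1] by auto
  then have "f integrable_on {- max R (max \<bar>a\<bar> \<bar>b\<bar>)..max R (max \<bar>a\<bar> \<bar>b\<bar>)}"
    by simp
  then have "f integrable_on {a..b}"
    by (rule integrable_on_subinterval) auto
  then show "(\<lambda>x. if x \<in> UNIV then f x else 0) integrable_on cbox a b"
    by simp
next
  fix e :: real assume "e > 0"
  then obtain R where R: "\<forall>a b. a \<le> -R \<longrightarrow> R \<le> b \<longrightarrow> norm (integral {a..b} f - L) < e"
    using assms by blast
  show "\<exists>B>0. \<forall>a b. ball 0 B \<subseteq> cbox a b \<longrightarrow>
      norm (integral (cbox a b) (\<lambda>x. if x \<in> UNIV then f x else 0) - L) < e"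
  proof (intro exI[of _ "\<bar>R\<bar> + 1"] conjI allI impI)
    fix a b :: real assume ball: "ball 0 (\<bar>R\<bar> + 1) \<subseteq> cbox a b"
    have "-\<bar>R\<bar> \<in> ball 0 (\<bar>R\<bar> + 1)" "\<bar>R\<bar> \<in> ball 0 (\<bar>R\<bar> + 1)"
      by (auto simp: dist_real_def)
    then have "-\<bar>R\<bar> \<in> cbox a b" "\<bar>R\<bar> \<in> cbox a b"
      using ball by blast+
    then have "a \<le> -R" "R \<le> b"
      by auto
    then show "norm (integral (cbox a b) (\<lambda>x. if x \<in> UNIV then f x else 0) - L) < e"
      using R by simp
  qed simp
qed

lemma inverse_square_decay_imp_bound:
  fixes f :: "real \<Rightarrow> 'a::real_normed_vector"
  assumes cont: "continuous_on UNIV f"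
    and decay: "\<And>x. X \<le> \<bar>x\<bar> \<Longrightarrow> norm (f x) \<le> C / x\<^sup>2"
  obtains D where "\<And>x. norm (f x) \<le> D * inverse (1 + x\<^sup>2)"
proof -
  define X1 where "X1 = max X 1"
  have "compact (f ` {-X1..X1})"
    by (rule compact_continuous_image) (use cont in \<open>auto intro: continuous_on_subset\<close>)
  then obtain M where "M > 0" and M: "\<And>x. x \<in> {-X1..X1} \<Longrightarrow> norm (f x) \<le> M"
    using compact_imp_bounded bounded_pos by (metis image_eqI)
  define D where "D = M * (1 + X1\<^sup>2) + 2 * \<bar>C\<bar>"
  have "norm (f x) \<le> D * inverse (1 + x\<^sup>2)" for x
  proof (cases "\<bar>x\<bar> \<le> X1")
    case True
    then have "x\<^sup>2 \<le> X1\<^sup>2"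
      using abs_le_square_iff[of x X1] by (simp add: X1_def)
    have "norm (f x) \<le> M"
      using M True by (simp add: abs_le_iff)
    also have "\<dots> \<le> M * (1 + X1\<^sup>2) * inverse (1 + x\<^sup>2)"
      using \<open>M > 0\<close> \<open>x\<^sup>2 \<le> X1\<^sup>2\<close> by (simp add: field_simps add_pos_nonneg)
    also have "\<dots> \<le> D * inverse (1 + x\<^sup>2)"
      by (intro mult_right_mono) (auto simp: D_def)
    finally show ?thesis .
  next
    case False
    then have "X \<le> \<bar>x\<bar>" "1 \<le> \<bar>x\<bar>"
      by (auto simp: X1_def)
    then have "1 \<le> x\<^sup>2"
      by (metis power2_abs one_le_power)
    have "norm (f x) \<le> \<bar>C\<bar> / x\<^sup>2"
      using decay[OF \<open>X \<le> \<bar>x\<bar>\<close>] divide_right_mono[OF abs_ge_self[of C] zero_le_power2[of x]]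
      by linarith
    also have "\<dots> \<le> 2 * \<bar>C\<bar> * inverse (1 + x\<^sup>2)"
    proof -
      have "\<bar>C\<bar> * (1 + x\<^sup>2) \<le> \<bar>C\<bar> * (2 * x\<^sup>2)"
        using \<open>1 \<le> x\<^sup>2\<close> by (intro mult_left_mono) auto
      moreover have "0 < x\<^sup>2"
        using \<open>1 \<le> x\<^sup>2\<close> by linarith
      ultimately show ?thesis
        by (simp add: field_simps add_pos_nonneg)
    qed
    also have "\<dots> \<le> D * inverse (1 + x\<^sup>2)"
      using \<open>M > 0\<close> by (intro mult_right_mono) (auto simp: D_def)
    finally show ?thesis .
  qed
  then show thesis
    by (rule that)
qed

lemma absolutely_integrable_inverse_square_decay:
  fixes f :: "real \<Rightarrow> 'a::euclidean_space"
  assumes cont: "continuous_on UNIV f"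
    and decay: "\<And>x. X \<le> \<bar>x\<bar> \<Longrightarrow> norm (f x) \<le> C / x\<^sup>2"
  shows "f absolutely_integrable_on UNIV"
proof -
  obtain D where bound: "\<And>x. norm (f x) \<le> D * inverse (1 + x\<^sup>2)"
    using inverse_square_decay_imp_bound[OF assms] by blast
  have "(\<lambda>x::real. inverse (1 + x\<^sup>2)) integrable_on UNIV"
    using set_borel_integral_eq_integral(1)[OF integrable_inverse_1_plus_square]
    by (simp add: einterval_def)
  then have "(\<lambda>x. D * inverse (1 + x\<^sup>2)) integrable_on UNIV"
    by (rule integrable_on_mult_right)
  moreover have "f \<in> borel_measurable (lebesgue_on UNIV)"
    using cont by (rule continuous_imp_measurable_on_sets_lebesgue) simp
  ultimately show ?thesis
    using bound by (intro measurable_bounded_by_integrable_imp_absolutely_integrable) auto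
qed

definition horizontal_strip :: "real \<Rightarrow> real \<Rightarrow> complex set" where
  "horizontal_strip a b = {z. a \<le> Im z \<and> Im z \<le> b}"

lemma convex_horizontal_strip: "convex (horizontal_strip a b)"
proof -
  have "horizontal_strip a b = {z. Im z \<ge> a} \<inter> {z. Im z \<le> b}"
    by (auto simp: horizontal_strip_def)
  then show ?thesis
    by (simp add: convex_Int convex_halfspace_Im_ge convex_halfspace_Im_le)
qed

lemma path_image_rectpath_subset_horizontal_strip:
  assumes "lo \<le> hi" "a \<le> b"
  shows "path_image (rectpath (Complex lo a) (Complex hi b)) \<subseteq> horizontal_strip a b"
  using path_image_rectpath_subset_cbox[of "Complex lo a" "Complex hi b"] assms
  by (auto simp: horizontal_strip_def in_cbox_complex_iff)

lemma has_contour_integral_linepath_horizontal: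
  assumes "lo < hi"
  shows "(f has_contour_integral I) (linepath (Complex lo y) (Complex hi y)) \<longleftrightarrow>
         ((\<lambda>x. f (Complex x y)) has_integral I) {lo..hi}"
proof -
  let ?g = "\<lambda>w. f (w + Complex 0 y)"
  have shift: "complex_of_real x + Complex 0 y = Complex x y" for x
    by (simp add: complex_eq_iff)
  have "(f has_contour_integral I) (linepath (Complex lo y) (Complex hi y)) \<longleftrightarrow>
        (?g has_contour_integral I) (linepath (of_real lo) (of_real hi))"
    unfolding has_contour_integral_linepath
  proof (intro arg_cong2[where f="\<lambda>h I. (h has_integral I) {0..1}"] refl ext)
    fix x :: real
    have "linepath (Complex lo y) (Complex hi y) x = linepath (of_real lo) (of_real hi) x + Complex 0 y"
      by (simp add: linepath_def complex_eq_iff algebra_simps)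
    moreover have "Complex hi y - Complex lo y = of_real hi - of_real lo"
      by (simp add: complex_eq_iff)
    ultimately show "f (linepath (Complex lo y) (Complex hi y) x) * (Complex hi y - Complex lo y) =
        ?g (linepath (of_real lo) (of_real hi) x) * (of_real hi - of_real lo)" by simp
  qed
  also have "\<dots> \<longleftrightarrow> ((\<lambda>x. ?g (of_real x)) has_integral I) {lo..hi}"
    using assms by (subst has_contour_integral_linepath_Reals_iff) auto
  also have "(\<lambda>x. ?g (of_real x)) = (\<lambda>x. f (Complex x y))"
    by (simp add: shift)
  finally show ?thesis .
qed

lemma norm_contour_integral_vertical_le:
  assumes I: "(f has_contour_integral I) (linepath (Complex x p) (Complex x q))"
    and bound: "\<And>y. y \<in> closed_segment p q \<Longrightarrow> norm (f (Complex x y)) \<le> e"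
  shows "norm I \<le> e * \<bar>q - p\<bar>"
proof -
  have "norm I \<le> e * norm (Complex x q - Complex x p)"
  proof (rule has_contour_integral_bound_linepath[OF I])
    show "0 \<le> e"
      using bound[of p] norm_ge_zero order_trans by blast
    fix z assume "z \<in> closed_segment (Complex x p) (Complex x q)"
    then have "z = Complex x (Im z)" "Im z \<in> closed_segment p q"
      by (auto simp: closed_segment_same_Re complex_eq_iff)
    then show "norm (f z) \<le> e"
      using bound by metis
  qed
  then show ?thesis
    by (simp add: cmod_def)
qed

lemma rectpath_integral_horizontal_sides:
  fixes \<Phi> :: "complex \<Rightarrow> complex"
  assumes "lo < hi" "a < b"
    and rect: "(\<Phi> has_contour_integral c) (rectpath (Complex lo a) (Complex hi b))"
    and sides: "\<And>y. a \<le> y \<Longrightarrow> y \<le> b \<Longrightarrow> norm (\<Phi> (Complex lo y)) \<le> e \<and> norm (\<Phi> (Complex hi y)) \<le> e"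
  shows "(\<lambda>x. \<Phi> (Complex x b)) integrable_on {lo..hi}"
    and "norm (integral {lo..hi} (\<lambda>x. \<Phi> (Complex x a)) - integral {lo..hi} (\<lambda>x. \<Phi> (Complex x b)) - c)
           \<le> 2 * e * (b - a)"
proof -
  define z1 z2 z3 z4 where "z1 = Complex lo a" and "z2 = Complex hi a"
    and "z3 = Complex hi b" and "z4 = Complex lo b"
  have path: "rectpath z1 z3 = linepath z1 z2 +++ linepath z2 z3 +++ linepath z3 z4 +++ linepath z4 z1"
    by (simp add: rectpath_def Let_def z1_def z2_def z3_def z4_def)
  have rect': "(\<Phi> has_contour_integral c) (rectpath z1 z3)"
    using rect by (simp add: z1_def z3_def)
  then have "\<Phi> contour_integrable_on rectpath z1 z3"
    by (auto simp: contour_integrable_on_def)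
  then have "\<Phi> contour_integrable_on linepath z1 z2" "\<Phi> contour_integrable_on linepath z2 z3"
    "\<Phi> contour_integrable_on linepath z3 z4" "\<Phi> contour_integrable_on linepath z4 z1"
    unfolding path by (simp_all add: valid_path_join)
  then obtain I1 I2 I3 I4 where
      I1: "(\<Phi> has_contour_integral I1) (linepath z1 z2)"
    and I2: "(\<Phi> has_contour_integral I2) (linepath z2 z3)"
    and I3: "(\<Phi> has_contour_integral I3) (linepath z3 z4)"
    and I4: "(\<Phi> has_contour_integral I4) (linepath z4 z1)"
    by (auto simp: contour_integrable_on_def)
  have "(\<Phi> has_contour_integral I1 + (I2 + (I3 + I4))) (rectpath z1 z3)"
    unfolding path by (intro has_contour_integral_join I1 I2 I3 I4) (simp_all add: valid_path_join)
  then have c: "c = I1 + (I2 + (I3 + I4))"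
    using has_contour_integral_unique[OF rect'] by blast
  have bottom: "((\<lambda>x. \<Phi> (Complex x a)) has_integral I1) {lo..hi}"
    using I1 has_contour_integral_linepath_horizontal[OF \<open>lo < hi\<close>] by (simp add: z1_def z2_def)
  have "(\<Phi> has_contour_integral - I3) (linepath z4 z3)"
    using has_contour_integral_reversepath[OF _ I3] by simp
  then have top: "((\<lambda>x. \<Phi> (Complex x b)) has_integral - I3) {lo..hi}"
    using has_contour_integral_linepath_horizontal[OF \<open>lo < hi\<close>] by (simp add: z3_def z4_def)
  then show "(\<lambda>x. \<Phi> (Complex x b)) integrable_on {lo..hi}"
    by blast
  have "norm I2 \<le> e * (b - a)" "norm I4 \<le> e * (b - a)"
    using norm_contour_integral_vertical_le[OF I2[unfolded z2_def z3_def]]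
      norm_contour_integral_vertical_le[OF I4[unfolded z4_def z1_def]] sides \<open>a < b\<close>
    by (auto simp: closed_segment_eq_real_ivl)
  moreover have "norm (integral {lo..hi} (\<lambda>x. \<Phi> (Complex x a)) - integral {lo..hi} (\<lambda>x. \<Phi> (Complex x b)) - c)
      = norm (I2 + I4)"
    using integral_unique[OF bottom] integral_unique[OF top] c by (simp add: norm_minus_commute add.commute)
  ultimately show "norm (integral {lo..hi} (\<lambda>x. \<Phi> (Complex x a)) - integral {lo..hi} (\<lambda>x. \<Phi> (Complex x b)) - c)
      \<le> 2 * e * (b - a)"
    using norm_triangle_ineq[of I2 I4] by linarith
qed

lemma has_integral_horizontal_strip_shift:
  fixes \<Phi> :: "complex \<Rightarrow> complex"
  assumes "a < b"
    and rect: "\<And>lo hi. lo \<le> -Rc \<Longrightarrow> Rc \<le> hi \<Longrightarrow>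
                 (\<Phi> has_contour_integral c) (rectpath (Complex lo a) (Complex hi b))"
    and decay: "\<And>e. e > 0 \<Longrightarrow> \<exists>R. \<forall>x y. R \<le> \<bar>x\<bar> \<longrightarrow> a \<le> y \<longrightarrow> y \<le> b \<longrightarrow> norm (\<Phi> (Complex x y)) \<le> e"
    and bottom: "((\<lambda>x. \<Phi> (Complex x a)) has_integral L) UNIV"
  shows "((\<lambda>x. \<Phi> (Complex x b)) has_integral (L - c)) UNIV"
proof (rule has_integral_UNIV_realI)
  fix \<epsilon> :: real assume "\<epsilon> > 0"
  define e where "e = \<epsilon> / (4 * (b - a))"
  have "e > 0" "2 * e * (b - a) = \<epsilon> / 2"
    using \<open>\<epsilon> > 0\<close> \<open>a < b\<close> by (simp_all add: e_def field_simps)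
  obtain R1 where R1: "\<forall>x y. R1 \<le> \<bar>x\<bar> \<longrightarrow> a \<le> y \<longrightarrow> y \<le> b \<longrightarrow> norm (\<Phi> (Complex x y)) \<le> e"
    using decay[OF \<open>e > 0\<close>] ..
  obtain R2 where R2: "\<And>lo hi. lo \<le> -R2 \<Longrightarrow> R2 \<le> hi \<Longrightarrow>
      norm (integral {lo..hi} (\<lambda>x. \<Phi> (Complex x a)) - L) < \<epsilon> / 2"
    using has_integral_UNIV_real_tail[OF bottom half_gt_zero[OF \<open>\<epsilon> > 0\<close>]] by blast
  define M where "M = max (max Rc 1) (max R1 R2)"
  show "\<exists>R. \<forall>lo hi. lo \<le> -R \<longrightarrow> R \<le> hi \<longrightarrow> (\<lambda>x. \<Phi> (Complex x b)) integrable_on {lo..hi} \<and>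
      norm (integral {lo..hi} (\<lambda>x. \<Phi> (Complex x b)) - (L - c)) < \<epsilon>"
  proof (intro exI[of _ M] allI impI)
    fix lo hi :: real assume "lo \<le> -M" "M \<le> hi"
    then have "lo < hi" "lo \<le> -Rc" "Rc \<le> hi" "lo \<le> -R2" "R2 \<le> hi" "R1 \<le> -lo" "R1 \<le> hi"
      unfolding M_def by linarith+
    define Ia Ib where "Ia = integral {lo..hi} (\<lambda>x. \<Phi> (Complex x a))"
      and "Ib = integral {lo..hi} (\<lambda>x. \<Phi> (Complex x b))"
    have "norm (\<Phi> (Complex lo y)) \<le> e \<and> norm (\<Phi> (Complex hi y)) \<le> e" if "a \<le> y" "y \<le> b" for y
      using R1 that \<open>R1 \<le> -lo\<close> \<open>R1 \<le> hi\<close> by auto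
    note sides = rectpath_integral_horizontal_sides[OF \<open>lo < hi\<close> \<open>a < b\<close> rect this]
    have "norm (Ia - L) < \<epsilon> / 2"
      unfolding Ia_def using R2 \<open>lo \<le> -R2\<close> \<open>R2 \<le> hi\<close> by blast
    moreover have "norm (Ia - Ib - c) \<le> \<epsilon> / 2"
      using sides(2) \<open>lo \<le> -Rc\<close> \<open>Rc \<le> hi\<close> \<open>2 * e * (b - a) = \<epsilon> / 2\<close> by (simp add: Ia_def Ib_def)
    moreover have "norm (Ib - (L - c)) \<le> norm (Ia - L) + norm (Ia - Ib - c)"
      using norm_triangle_ineq4[of "Ia - L" "Ia - Ib - c"] by (simp add: algebra_simps)
    ultimately show "(\<lambda>x. \<Phi> (Complex x b)) integrable_on {lo..hi} \<and>
        norm (integral {lo..hi} (\<lambda>x. \<Phi> (Complex x b)) - (L - c)) < \<epsilon>"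
      using sides(1) \<open>lo \<le> -Rc\<close> \<open>Rc \<le> hi\<close> unfolding Ib_def by auto
  qed
qed

lemma summable_Suc_powr: "r < -1 \<Longrightarrow> summable (\<lambda>n. real (Suc n) powr r)"
  using summable_real_powr_iff[of r] summable_Suc_iff[of "\<lambda>n. real n powr r"] by simp

definition frac_integral :: "complex \<Rightarrow> complex" where
  "frac_integral s = integral {1..} (\<lambda>x::real. of_real (frac x) * of_real x powr (- s - 1))"

lemma zeta_eq_frac_integral: "zeta s = s / (s - 1) - s * frac_integral s"
  by (simp add: zeta_def frac_integral_def)

definition frac_piece :: "nat \<Rightarrow> complex \<Rightarrow> complex" where
  "frac_piece k s = integral {real k..real k + 1} (\<lambda>x. (of_real x - of_nat k) * of_real x powr (- s - 1))"

lemma has_integral_frac_piece: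
  assumes "k \<ge> 1"
  shows "((\<lambda>x. (of_real x - of_nat k) * of_real x powr (- s - 1)) has_integral frac_piece k s)
           {real k..real k + 1}"
  unfolding frac_piece_def using assms
  by (intro integrable_integral integrable_continuous_real continuous_intros) auto

lemma norm_of_real_powr: "x > 0 \<Longrightarrow> norm (of_real x powr w) = x powr Re w"
  by (simp add: norm_powr_real_powr)

lemma norm_frac_piece_le:
  assumes "k \<ge> 1" "0 \<le> d" "d \<le> Re s"
  shows "norm (frac_piece k s) \<le> real k powr (- d - 1)"
proof -
  have "norm ((of_real x - of_nat k) * of_real x powr (- s - 1)) \<le> real k powr (- d - 1)"
    if x: "x \<in> {real k..real k + 1}" for x :: real
  proof -
    have "norm (of_real x - of_nat k :: complex) = \<bar>x - k\<bar>"
      by (metis norm_of_real of_real_diff of_real_of_nat_eq)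
    moreover have "norm (of_real x powr (- s - 1)) = x powr (- Re s - 1)"
      using x assms(1) by (simp add: norm_of_real_powr)
    ultimately have "norm ((of_real x - of_nat k) * of_real x powr (- s - 1))
        = \<bar>x - k\<bar> * x powr (- Re s - 1)"
      by (simp add: norm_mult)
    also have "\<dots> \<le> 1 * real k powr (- Re s - 1)"
      using x assms by (intro mult_mono powr_mono2') auto
    also have "\<dots> \<le> real k powr (- d - 1)"
      using assms by (simp add: powr_mono)
    finally show ?thesis .
  qed
  then show ?thesis
    using has_integral_bound_real[OF _ finite.emptyI has_integral_frac_piece[OF assms(1)]] by simp
qed

lemma frac_piece_holomorphic:
  assumes "k \<ge> 1"
  shows "frac_piece k holomorphic_on UNIV"
proof -
  have "(\<lambda>s. integral (cbox (real k) (real k + 1))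
          (\<lambda>x. (of_real x - of_nat k) * of_real x powr (- s - 1))) holomorphic_on UNIV"
  proof (rule leibniz_rule_holomorphic)
    fix s :: complex and x :: real
    assume "x \<in> cbox (real k) (real k + 1)"
    then have "complex_of_real x \<noteq> 0" using assms by auto
    then show "((\<lambda>s. (of_real x - of_nat k) * of_real x powr (- s - 1)) has_field_derivative
            - (of_real x - of_nat k) * Ln (of_real x) * of_real x powr (- s - 1)) (at s within UNIV)"
      unfolding powr_def by (auto intro!: derivative_eq_intros simp: algebra_simps)
  next
    show "(\<lambda>x. (of_real x - of_nat k) * of_real x powr (- s - 1)) integrable_on cbox (real k) (real k + 1)"
      for s :: complex
      using has_integral_frac_piece[OF assms] by auto
  next
    show "continuous_on (UNIV \<times> cbox (real k) (real k + 1))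
            (\<lambda>(s, x). - (of_real x - of_nat k) * Ln (of_real x) * of_real x powr (- s - 1))"
      using assms by (auto intro!: continuous_intros simp: case_prod_unfold)
  qed simp
  then show ?thesis
    unfolding frac_piece_def by simp
qed

lemma has_integral_frac_partial:
  "((\<lambda>x. of_real (frac x) * of_real x powr (- s - 1)) has_integral (\<Sum>k<N. frac_piece (Suc k) s))
     {1..real N + 1}"
proof (induction N)
  case 0
  show ?case
    using has_integral_refl(2)[of _ 1] by simp
next
  case (Suc N)
  have "((\<lambda>x. of_real (frac x) * of_real x powr (- s - 1)) has_integral frac_piece (Suc N) s)
      {real (Suc N)..real (Suc N) + 1}"
  proof (rule has_integral_spike_finite[OF _ _ has_integral_frac_piece])
    fix x assume "x \<in> {real (Suc N)..real (Suc N) + 1} - {real (Suc N) + 1}"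
    then have "frac x = x - real (Suc N)"
      using floor_unique[of "int (Suc N)" x] by (simp add: frac_def)
    then show "of_real (frac x) * of_real x powr (- s - 1) =
        (of_real x - of_nat (Suc N)) * of_real x powr (- s - 1)"
      by simp
  qed simp_all
  from has_integral_combine[OF _ _ Suc.IH] this show ?case
    by (simp add: add.commute)
qed

lemma frac_piece_sums:
  assumes "Re s > 0"
  shows "(\<lambda>k. frac_piece (Suc k) s) sums frac_integral s"
proof -
  define f where "f x = of_real (frac x) * of_real x powr (- s - 1)" for x :: real
  define fN where "fN N x = (if x \<in> {1..real N + 1} then f x else 0)" for N x
  have fN: "(fN N has_integral (\<Sum>k<N. frac_piece (Suc k) s)) {1..}" for N
  proof -
    have "(fN N has_integral (\<Sum>k<N. frac_piece (Suc k) s)) {1..real N + 1}"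
      using has_integral_frac_partial[of s N] unfolding f_def[symmetric]
      by (rule has_integral_eq[rotated]) (simp add: fN_def)
    then show ?thesis
      by (rule has_integral_on_superset) (auto simp: fN_def)
  qed
  then have fN_integrable: "fN N integrable_on {1..}" for N
    by blast
  have dominant: "(\<lambda>x. x powr (- Re s - 1)) integrable_on {1..}"
    using has_integral_powr_to_inf[of "- Re s - 1" 1] assms by (auto simp: integrable_on_def)
  have dominated: "norm (fN N x) \<le> x powr (- Re s - 1)" if "x \<in> {1..}" for N x
  proof -
    have "norm (f x) = frac x * x powr (- Re s - 1)"
      using that by (simp add: f_def norm_mult norm_of_real_powr)
    also have "\<dots> \<le> x powr (- Re s - 1)"
      by (simp add: frac_lt_1 less_imp_le mult_left_le_one_le)
    finally show ?thesis
      by (simp add: fN_def)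
  qed
  have pointwise: "(\<lambda>N. fN N x) \<longlonglongrightarrow> f x" if "x \<in> {1..}" for x
  proof (rule tendsto_eventually)
    obtain N0 :: nat where "x \<le> real N0"
      using real_arch_simple by blast
    then show "\<forall>\<^sub>F N in sequentially. fN N x = f x"
      unfolding eventually_sequentially fN_def using that by (intro exI[of _ N0]) auto
  qed
  have "(\<lambda>N. integral {1..} (fN N)) \<longlonglongrightarrow> integral {1..} f"
    by (rule dominated_convergence(2)[OF fN_integrable dominant dominated pointwise])
  moreover have "integral {1..} (fN N) = (\<Sum>k<N. frac_piece (Suc k) s)" for N
    using fN by (rule integral_unique)
  ultimately show ?thesis
    unfolding sums_def frac_integral_def f_def[symmetric] by simp
qed

lemma frac_integral_holomorphic: "frac_integral holomorphic_on {s. Re s > 0}"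
proof -
  have S: "open {s::complex. Re s > 0}" by (rule open_halfspace_Re_gt)
  obtain g where g: "\<forall>s \<in> {s. Re s > 0}. ((\<lambda>k. frac_piece (Suc k) s) sums g s) \<and> g field_differentiable (at s)"
  proof (rule series_differentiable_comparison_complex[OF S])
    show "frac_piece (Suc k) field_differentiable (at s)" for k s
      by (rule holomorphic_on_imp_differentiable_at[OF frac_piece_holomorphic]) auto
  next
    fix s :: complex assume s: "s \<in> {s. Re s > 0}"
    define d where "d = Re s / 2"
    define h where "h k = complex_of_real (real (Suc k) powr (- d - 1))" for k
    have "d > 0" using s by (simp add: d_def)
    have "summable (\<lambda>k. real (Suc k) powr (- d - 1))"
      using \<open>d > 0\<close> by (intro summable_Suc_powr) auto
    then have "summable h"
      unfolding h_def by (rule summable_of_real)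
    moreover have "range h \<subseteq> \<real>\<^sub>\<ge>\<^sub>0"
      by (auto simp: h_def)
    moreover have "\<forall>\<^sub>F k in sequentially. \<forall>z\<in>ball s d \<inter> {s. Re s > 0}.
        norm (frac_piece (Suc k) z) \<le> norm (h k)"
    proof (intro always_eventually allI ballI)
      fix k z assume "z \<in> ball s d \<inter> {s. Re s > 0}"
      then have "\<bar>Re s - Re z\<bar> < d"
        using abs_Re_le_cmod[of "s - z"] by (auto simp: dist_norm)
      then have "d \<le> Re z"
        unfolding d_def abs_less_iff by linarith
      then show "norm (frac_piece (Suc k) z) \<le> norm (h k)"
        using norm_frac_piece_le[of "Suc k" d z] \<open>d > 0\<close> by (simp add: h_def)
    qed
    ultimately show "\<exists>d (h :: nat \<Rightarrow> complex). 0 < d \<and> summable h \<and> range h \<subseteq> \<real>\<^sub>\<ge>\<^sub>0 \<and>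
        (\<forall>\<^sub>F k in sequentially. \<forall>z\<in>ball s d \<inter> {s. Re s > 0}. norm (frac_piece (Suc k) z) \<le> norm (h k))"
      using \<open>d > 0\<close> by blast
  qed blast
  have "g holomorphic_on {s. Re s > 0}"
    using g S by (simp add: holomorphic_on_def field_differentiable_at_within)
  moreover have "g s = frac_integral s" if "Re s > 0" for s
    using g that frac_piece_sums[OF that] sums_unique2 by auto
  ultimately show ?thesis
    by (rule holomorphic_transform) simp
qed

lemma norm_frac_integral_le:
  assumes "0 < d" "d \<le> Re s"
  shows "norm (frac_integral s) \<le> (\<Sum>k. real (Suc k) powr (- d - 1))"
proof -
  have "frac_integral s = (\<Sum>k. frac_piece (Suc k) s)"
    using frac_piece_sums[of s] assms by (simp add: sums_iff)
  also have "norm \<dots> \<le> (\<Sum>k. real (Suc k) powr (- d - 1))"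
  proof (rule norm_suminf_le)
    show "summable (\<lambda>k. real (Suc k) powr (- d - 1))"
      using \<open>d > 0\<close> by (intro summable_Suc_powr) auto
    show "norm (frac_piece (Suc k) s) \<le> real (Suc k) powr (- d - 1)" for k
      using norm_frac_piece_le[of "Suc k" d s] assms by simp
  qed
  finally show ?thesis .
qed

definition zeta_regular :: "complex \<Rightarrow> complex" where
  "zeta_regular s = s - s * (s - 1) * frac_integral s"

lemma zeta_regular_holomorphic: "zeta_regular holomorphic_on {s. Re s > 0}"
  unfolding zeta_regular_def by (intro holomorphic_intros frac_integral_holomorphic)

lemma zeta_regular_one [simp]: "zeta_regular 1 = 1"
  by (simp add: zeta_regular_def)

lemma zeta_eq_zeta_regular: "s \<noteq> 1 \<Longrightarrow> zeta s = zeta_regular s / (s - 1)"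
  unfolding zeta_eq_frac_integral zeta_regular_def by (simp add: field_simps)

lemma zeta_vertical_growth:
  obtains M where "0 \<le> M"
    and "\<And>s. 1/2 \<le> Re s \<Longrightarrow> Re s \<le> \<bar>Im s\<bar> \<Longrightarrow> 1 \<le> \<bar>Im s\<bar> \<Longrightarrow> norm (zeta s) \<le> M * \<bar>Im s\<bar>"
proof
  define B where "B = (\<Sum>k. real (Suc k) powr (- 1/2 - 1))"
  have "0 \<le> B"
    unfolding B_def by (intro suminf_nonneg summable_Suc_powr) auto
  then show "0 \<le> 2 * (1 + B)"
    by simp
  fix s :: complex assume s: "1/2 \<le> Re s" "Re s \<le> \<bar>Im s\<bar>" "1 \<le> \<bar>Im s\<bar>"
  have "norm s \<le> 2 * \<bar>Im s\<bar>"
    using cmod_le[of s] s by linarith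
  have "1 \<le> norm (s - 1)"
    using abs_Im_le_cmod[of "s - 1"] s(3) by simp
  have "norm (s / (s - 1)) \<le> norm s"
    using \<open>1 \<le> norm (s - 1)\<close> by (simp add: norm_divide divide_le_eq mult_le_cancel_left1 mult_left_mono)
  moreover have "norm (s * frac_integral s) \<le> norm s * B"
    unfolding norm_mult B_def using norm_frac_integral_le[of "1/2" s] s(1) by (intro mult_left_mono) auto
  ultimately have "norm (zeta s) \<le> norm s + norm s * B"
    using norm_triangle_ineq4[of "s / (s - 1)" "s * frac_integral s"] unfolding zeta_eq_frac_integral
    by linarith
  also have "norm s + norm s * B \<le> 2 * (1 + B) * \<bar>Im s\<bar>"
    using \<open>norm s \<le> 2 * \<bar>Im s\<bar>\<close> \<open>0 \<le> B\<close> mult_right_mono[of "norm s" "2 * \<bar>Im s\<bar>" "1 + B"]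
    by (simp add: algebra_simps)
  finally show "norm (zeta s) \<le> 2 * (1 + B) * \<bar>Im s\<bar>" .
qed

lemma powr_add_one: "z \<noteq> 0 \<Longrightarrow> z powr (w + 1) = z * z powr w" for z w :: complex
  by (simp add: powr_add)

lemma frac_piece_antiderivative:
  assumes "k \<ge> 1" "s \<noteq> 0" "s \<noteq> 1"
  defines "H \<equiv> \<lambda>z. z powr (1 - s) / (1 - s) + of_nat k * (z powr (- s) / s)"
  shows "frac_piece k s = H (of_nat (Suc k)) - H (of_nat k)"
proof -
  have deriv_H: "(H has_field_derivative (z - of_nat k) * z powr (- s - 1)) (at z)"
    if "z \<notin> \<real>\<^sub>\<le>\<^sub>0" for z
  proof -
    have "z \<noteq> 0" using that by auto
    have "(H has_field_derivative
        (1 - s) * z powr (1 - s - 1) / (1 - s) + of_nat k * ((- s) * z powr (- s - 1) / s)) (at z)"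
      unfolding H_def by (intro DERIV_add DERIV_cdivide DERIV_cmult has_field_derivative_powr that)
    moreover have "(1 - s) * z powr (1 - s - 1) / (1 - s) + of_nat k * ((- s) * z powr (- s - 1) / s)
        = z * z powr (- s - 1) - of_nat k * z powr (- s - 1)"
      using assms(2,3) powr_add_one[OF \<open>z \<noteq> 0\<close>, of "- s - 1"] by simp
    ultimately show ?thesis
      by (simp add: left_diff_distrib)
  qed
  have "((\<lambda>x. (of_real x - of_nat k) * of_real x powr (- s - 1)) has_integral
          H (of_real (real k + 1)) - H (of_real (real k))) {real k..real k + 1}"
  proof (rule fundamental_theorem_of_calculus)
    fix x assume "x \<in> {real k..real k + 1}"
    then have "complex_of_real x \<notin> \<real>\<^sub>\<le>\<^sub>0"
      using assms(1) by (auto simp: complex_nonpos_Reals_iff)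
    then show "((\<lambda>x. H (of_real x)) has_vector_derivative
        (of_real x - of_nat k) * of_real x powr (- s - 1)) (at x within {real k..real k + 1})"
      by (rule has_vector_derivative_real_field[OF deriv_H])
  qed simp
  then show ?thesis
    unfolding frac_piece_def by (simp add: integral_unique add.commute)
qed

lemma frac_piece_eq:
  assumes "k \<ge> 1" "s \<noteq> 0" "s \<noteq> 1"
  shows "s * frac_piece k s =
    (of_nat (Suc k) powr (1 - s) - of_nat k powr (1 - s)) / (1 - s) - of_nat (Suc k) powr (- s)"
proof -
  define P Q A B where "P = of_nat (Suc k) powr (1 - s)" and "Q = of_nat k powr (1 - s)"
    and "A = of_nat (Suc k) powr (- s)" and "B = of_nat k powr (- s :: complex)"
  have "1 - s \<noteq> 0"
    using assms(3) by simp
  have "frac_piece k s = (P - Q) / (1 - s) + of_nat k * ((A - B) / s)"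
    unfolding frac_piece_antiderivative[OF assms] P_def Q_def A_def B_def
    by (simp add: diff_divide_distrib right_diff_distrib)
  then have "s * frac_piece k s = s * (P - Q) / (1 - s) + of_nat k * (A - B)"
    using assms(2) by (simp add: distrib_left)
  also have "\<dots> = s * (P - Q) / (1 - s) + (P - Q) - A"
  proof -
    have "of_nat (Suc k) \<noteq> (0 :: complex)" "of_nat k \<noteq> (0 :: complex)"
      using assms(1) by (simp_all only: of_nat_eq_0_iff)
    then have "P = of_nat k * A + A" "Q = of_nat k * B"
      using powr_add_one[of "of_nat (Suc k)" "- s"] powr_add_one[of "of_nat k" "- s"]
      by (simp_all add: P_def Q_def A_def B_def algebra_simps)
    then show ?thesis by (simp add: algebra_simps)
  qed
  also have "\<dots> = (P - Q) / (1 - s) - A"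
    using \<open>1 - s \<noteq> 0\<close> by (simp add: field_simps)
  finally show ?thesis
    by (simp add: P_def Q_def A_def)
qed

lemma sum_powr_eq_frac_pieces:
  assumes "s \<noteq> 0" "s \<noteq> 1"
  shows "(\<Sum>k<Suc N. of_nat (Suc k) powr (- s)) =
    s / (s - 1) - s * (\<Sum>k<N. frac_piece (Suc k) s) - of_nat (Suc N) powr (1 - s) / (s - 1)"
proof (induction N)
  case 0
  have "s / (s - 1) - 1 / (s - 1) = 1"
    using assms(2) by (simp flip: diff_divide_distrib)
  then show ?case by simp
next
  case (Suc N)
  have "s - 1 \<noteq> 0" using assms(2) by simp
  define T P1 P2 A2 where "T = (\<Sum>k<N. frac_piece (Suc k) s)"
    and "P1 = of_nat (Suc N) powr (1 - s)" and "P2 = of_nat (Suc (Suc N)) powr (1 - s)"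
    and "A2 = of_nat (Suc (Suc N)) powr (- s :: complex)"
  have step: "s * frac_piece (Suc N) s = (P2 - P1) / (1 - s) - A2"
    using frac_piece_eq[of "Suc N" s] assms by (simp add: P1_def P2_def A2_def)
  have "(\<Sum>k<Suc (Suc N). of_nat (Suc k) powr (- s)) = s / (s - 1) - s * T - P1 / (s - 1) + A2"
    using Suc.IH by (simp add: T_def P1_def A2_def)
  also have "\<dots> = s / (s - 1) - (s * T + ((P2 - P1) / (1 - s) - A2)) - P2 / (s - 1)"
  proof -
    have "(P2 - P1) / (1 - s) = (P1 - P2) / (s - 1)"
      by (metis minus_diff_eq divide_minus_left divide_minus_right)
    then show ?thesis
      by (simp add: diff_divide_distrib algebra_simps)
  qed
  also have "\<dots> = s / (s - 1) - s * (\<Sum>k<Suc N. frac_piece (Suc k) s) - P2 / (s - 1)"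
    using step by (simp add: T_def distrib_left)
  finally show ?case
    by (simp add: P2_def)
qed

lemma zeta_sums:
  assumes "Re s > 1"
  shows "(\<lambda>n. of_nat (Suc n) powr (- s)) sums zeta s"
proof -
  have "s \<noteq> 0" "s \<noteq> 1"
    using assms by auto
  have "(\<lambda>N. s / (s - 1) - s * (\<Sum>k<N. frac_piece (Suc k) s) - of_nat (Suc N) powr (1 - s) / (s - 1))
      \<longlonglongrightarrow> s / (s - 1) - s * frac_integral s - 0 / (s - 1)"
    using frac_piece_sums[of s] assms unfolding sums_def
    by (intro tendsto_intros tendsto_neg_powr_complex_of_nat filterlim_Suc) auto
  then have "(\<lambda>N. \<Sum>k<Suc N. of_nat (Suc k) powr (- s)) \<longlonglongrightarrow> zeta s"
    using sum_powr_eq_frac_pieces[OF \<open>s \<noteq> 0\<close> \<open>s \<noteq> 1\<close>] by (simp add: zeta_eq_frac_integral)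
  then show ?thesis
    unfolding sums_def by (rule LIMSEQ_imp_Suc)
qed

lemma divide_abs_power_le:
  fixes D e x :: real
  assumes "0 < e" "max 1 (\<bar>D\<bar> / e) \<le> \<bar>x\<bar>" "1 \<le> n"
  shows "D / \<bar>x\<bar> ^ n \<le> e"
proof -
  have "1 \<le> \<bar>x\<bar>" "\<bar>D\<bar> \<le> e * \<bar>x\<bar>"
    using assms(1,2) by (auto simp: divide_le_eq mult.commute)
  have "\<bar>x\<bar> ^ 1 \<le> \<bar>x\<bar> ^ n"
    using power_increasing[OF assms(3) \<open>1 \<le> \<bar>x\<bar>\<close>] .
  have "D / \<bar>x\<bar> ^ n \<le> \<bar>D\<bar> / \<bar>x\<bar> ^ n"
    by (intro divide_right_mono) auto
  also have "\<dots> \<le> \<bar>D\<bar> / \<bar>x\<bar>"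
    using \<open>1 \<le> \<bar>x\<bar>\<close> \<open>\<bar>x\<bar> ^ 1 \<le> \<bar>x\<bar> ^ n\<close> by (intro divide_left_mono) auto
  also have "\<dots> \<le> e"
    using \<open>1 \<le> \<bar>x\<bar>\<close> \<open>\<bar>D\<bar> \<le> e * \<bar>x\<bar>\<close> by (simp add: divide_le_eq)
  finally show ?thesis .
qed

lemma horizontal_strip_uniform_decay:
  assumes bound: "\<And>x y. X \<le> \<bar>x\<bar> \<Longrightarrow> a \<le> y \<Longrightarrow> y \<le> b \<Longrightarrow> norm (f (Complex x y)) \<le> D / \<bar>x\<bar> ^ n"
    and "1 \<le> n" "0 < e"
  shows "\<exists>R. \<forall>x y. R \<le> \<bar>x\<bar> \<longrightarrow> a \<le> y \<longrightarrow> y \<le> b \<longrightarrow> norm (f (Complex x y)) \<le> e"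
proof (intro exI[of _ "max X (max 1 (\<bar>D\<bar> / e))"] allI impI)
  fix x y assume x: "max X (max 1 (\<bar>D\<bar> / e)) \<le> \<bar>x\<bar>" and y: "a \<le> y" "y \<le> b"
  have "norm (f (Complex x y)) \<le> D / \<bar>x\<bar> ^ n"
    using bound[OF _ y] x by simp
  also have "\<dots> \<le> e"
    using x assms(2,3) by (intro divide_abs_power_le) auto
  finally show "norm (f (Complex x y)) \<le> e" .
qed

lemma of_nat_powr_Complex_add_Im:
  assumes "m \<ge> 1"
  shows "(of_nat m powr (- Complex \<sigma> (t + x)) :: complex) =
           of_nat m powr (- Complex \<sigma> t) * exp (- \<i> * of_real (x * ln (real m)))"
proof -
  have "- Complex \<sigma> (t + x) = - Complex \<sigma> t + - (\<i> * of_real x)"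
    by (simp add: complex_eq_iff)
  then have "(of_nat m powr (- Complex \<sigma> (t + x)) :: complex) =
      of_nat m powr (- Complex \<sigma> t) * of_nat m powr (- (\<i> * of_real x))"
    by (simp only: powr_add)
  also have "(of_nat m powr (- (\<i> * of_real x)) :: complex) = exp (- \<i> * of_real (x * ln (real m)))"
    using assms by (simp add: powr_def mult.assoc)
  finally show ?thesis .
qed

lemma Complex_add_imaginary_mult: "Complex \<sigma> t + \<i> * Complex x y = Complex (\<sigma> - y) (t + x)"
  by (simp add: complex_eq_iff)

lemma continuous_on_horizontal_line:
  assumes "continuous_on (horizontal_strip a b) f" "a \<le> y" "y \<le> b"
  shows "continuous_on UNIV (\<lambda>x. f (Complex x y))"
proof (rule continuous_on_compose2[OF assms(1)])
  show "continuous_on UNIV (\<lambda>x. Complex x y)"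
    unfolding Complex_eq by (intro continuous_intros)
qed (use assms(2,3) in \<open>auto simp: horizontal_strip_def\<close>)

lemma horizontal_strip_holomorphic_shift:
  fixes \<Phi> :: "complex \<Rightarrow> complex"
  assumes "a < b"
    and hol: "\<Phi> holomorphic_on horizontal_strip a b"
    and bound: "\<And>x y. X \<le> \<bar>x\<bar> \<Longrightarrow> a \<le> y \<Longrightarrow> y \<le> b \<Longrightarrow> norm (\<Phi> (Complex x y)) \<le> C / \<bar>x\<bar> ^ 2"
  shows "(\<lambda>x. \<Phi> (Complex x a)) integrable_on UNIV"
    and "((\<lambda>x. \<Phi> (Complex x b)) has_integral integral UNIV (\<lambda>x. \<Phi> (Complex x a))) UNIV"
proof -
  have "(\<lambda>x. \<Phi> (Complex x a)) absolutely_integrable_on UNIV"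
  proof (rule absolutely_integrable_inverse_square_decay[where X=X and C=C])
    show "continuous_on UNIV (\<lambda>x. \<Phi> (Complex x a))"
      using \<open>a < b\<close>
      by (intro continuous_on_horizontal_line[OF holomorphic_on_imp_continuous_on[OF hol]]) auto
  qed (use bound \<open>a < b\<close> in auto)
  then show "(\<lambda>x. \<Phi> (Complex x a)) integrable_on UNIV"
    by (simp add: absolutely_integrable_on_def)
  then have bottom: "((\<lambda>x. \<Phi> (Complex x a)) has_integral integral UNIV (\<lambda>x. \<Phi> (Complex x a))) UNIV"
    by (rule integrable_integral)
  have "((\<lambda>x. \<Phi> (Complex x b)) has_integral integral UNIV (\<lambda>x. \<Phi> (Complex x a)) - 0) UNIV"
  proof (rule has_integral_horizontal_strip_shift[OF \<open>a < b\<close> _ _ bottom, where Rc=0])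
    fix lo hi :: real assume "lo \<le> -0" "0 \<le> hi"
    then show "(\<Phi> has_contour_integral 0) (rectpath (Complex lo a) (Complex hi b))"
      using path_image_rectpath_subset_horizontal_strip[of lo hi a b] \<open>a < b\<close>
      by (intro Cauchy_theorem_convex_simple[OF hol convex_horizontal_strip]) auto
  next
    show "\<exists>R. \<forall>x y. R \<le> \<bar>x\<bar> \<longrightarrow> a \<le> y \<longrightarrow> y \<le> b \<longrightarrow> norm (\<Phi> (Complex x y)) \<le> e"
      if "e > 0" for e
      using horizontal_strip_uniform_decay[OF bound _ that] by simp
  qed
  then show "((\<lambda>x. \<Phi> (Complex x b)) has_integral integral UNIV (\<lambda>x. \<Phi> (Complex x a))) UNIV"
    by simp
qed

lemma fourier_powr_shift:
  fixes K :: "complex \<Rightarrow> complex" and m :: nat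
  assumes "a < 0" "0 \<le> \<sigma>" "m \<ge> 1"
    and holK: "K holomorphic_on horizontal_strip a 0"
    and decay: "\<And>x y. X \<le> \<bar>x\<bar> \<Longrightarrow> a \<le> y \<Longrightarrow> y \<le> 0 \<Longrightarrow> norm (K (Complex x y)) \<le> C / x\<^sup>2"
  shows "((\<lambda>x. of_nat m powr (- Complex (\<sigma> - a) (t + x)) * K (Complex x a)) has_integral
           fourier K (ln (real m)) * of_nat m powr (- Complex \<sigma> t)) UNIV"
proof -
  define \<Phi> where "\<Phi> u = of_nat m powr (- (Complex \<sigma> t + \<i> * u)) * K u" for u
  have \<Phi>_line: "\<Phi> (Complex x y) = of_nat m powr (- Complex (\<sigma> - y) (t + x)) * K (Complex x y)" for x y
    by (simp add: \<Phi>_def Complex_add_imaginary_mult)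
  have \<Phi>_bound: "norm (\<Phi> (Complex x y)) \<le> C / \<bar>x\<bar> ^ 2" if "X \<le> \<bar>x\<bar>" "a \<le> y" "y \<le> 0" for x y
  proof -
    have "norm (of_nat m powr (- Complex (\<sigma> - y) (t + x)) :: complex) = real m powr (y - \<sigma>)"
      by (subst norm_powr_real_powr) auto
    also have "\<dots> \<le> real m powr 0"
      using that assms(2,3) by (intro powr_mono) auto
    finally have "norm (\<Phi> (Complex x y)) \<le> norm (K (Complex x y))"
      unfolding \<Phi>_line norm_mult using assms(3) by (simp add: mult_left_le_one_le)
    then show ?thesis
      using decay[OF that] by simp
  qed
  have "\<Phi> holomorphic_on horizontal_strip a 0"
    unfolding \<Phi>_def by (intro holomorphic_intros holK)
  note shift = horizontal_strip_holomorphic_shift[OF \<open>a < 0\<close> this \<Phi>_bound]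
  define c where "c = (of_nat m powr (- Complex \<sigma> t) :: complex)"
  have "\<Phi> (Complex x 0) = c * (K (of_real x) * exp (- \<i> * of_real (x * ln (real m))))" for x
    unfolding \<Phi>_line c_def by (subst of_nat_powr_Complex_add_Im[OF assms(3)]) (simp add: complex_of_real_def)
  then have "((\<lambda>x. c * (K (of_real x) * exp (- \<i> * of_real (x * ln (real m))))) has_integral
      integral UNIV (\<lambda>x. \<Phi> (Complex x a))) UNIV"
    using shift(2) by simp
  moreover have "c \<noteq> 0"
    using assms(3) by (simp add: c_def)
  ultimately have "((\<lambda>x. K (of_real x) * exp (- \<i> * of_real (x * ln (real m)))) has_integral
      integral UNIV (\<lambda>x. \<Phi> (Complex x a)) / c) UNIV"
    by (subst (asm) has_integral_mult_right_iff)
  then have "fourier K (ln (real m)) = integral UNIV (\<lambda>x. \<Phi> (Complex x a)) / c"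
    unfolding fourier_def by (rule integral_unique)
  moreover have "((\<lambda>x. \<Phi> (Complex x a)) has_integral integral UNIV (\<lambda>x. \<Phi> (Complex x a))) UNIV"
    using shift(1) by (rule integrable_integral)
  ultimately show ?thesis
    using \<open>c \<noteq> 0\<close> unfolding \<Phi>_line c_def by simp
qed

lemma has_integral_zeta_kernel_line:
  fixes K :: "complex \<Rightarrow> complex"
  assumes "a < 0" "0 \<le> \<sigma>" "1 < \<sigma> - a"
    and holK: "K holomorphic_on horizontal_strip a 0"
    and decay: "\<And>x y. X \<le> \<bar>x\<bar> \<Longrightarrow> a \<le> y \<Longrightarrow> y \<le> 0 \<Longrightarrow> norm (K (Complex x y)) \<le> C / x\<^sup>2"
  shows "((\<lambda>x. zeta (Complex (\<sigma> - a) (t + x)) * K (Complex x a)) has_integral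
           (\<Sum>n. fourier K (ln (real (Suc n))) * of_nat (Suc n) powr (- Complex \<sigma> t))) UNIV"
proof -
  define g where "g n x = of_nat (Suc n) powr (- Complex (\<sigma> - a) (t + x)) * K (Complex x a)" for n x
  define F where "F n = fourier K (ln (real (Suc n))) * of_nat (Suc n) powr (- Complex \<sigma> t)" for n
  define Z where "Z = (\<Sum>n. real (Suc n) powr (- (\<sigma> - a)))"
  have g_integral: "(g n has_integral F n) UNIV" for n
    unfolding g_def F_def using assms by (intro fourier_powr_shift) auto
  have "(\<lambda>x. K (Complex x a)) absolutely_integrable_on UNIV"
  proof (rule absolutely_integrable_inverse_square_decay[where X=X and C=C])
    show "continuous_on UNIV (\<lambda>x. K (Complex x a))"
      using \<open>a < 0\<close>
      by (intro continuous_on_horizontal_line[OF holomorphic_on_imp_continuous_on[OF holK]]) auto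
  qed (use decay \<open>a < 0\<close> in auto)
  then have dominant: "(\<lambda>x. Z * norm (K (Complex x a))) integrable_on UNIV"
    by (intro integrable_on_mult_right) (simp add: absolutely_integrable_on_def)
  have partial: "(\<lambda>x. \<Sum>n<N. g n x) integrable_on UNIV" for N
    using g_integral by (intro integrable_sum) auto
  have dominated: "norm (\<Sum>n<N. g n x) \<le> Z * norm (K (Complex x a))" for N x
  proof -
    have "norm (g n x) = real (Suc n) powr (- (\<sigma> - a)) * norm (K (Complex x a))" for n
      by (simp add: g_def norm_mult norm_powr_real_powr)
    then have "norm (\<Sum>n<N. g n x) \<le> (\<Sum>n<N. real (Suc n) powr (- (\<sigma> - a))) * norm (K (Complex x a))"
      using norm_sum[of "\<lambda>n. g n x" "{..<N}"] by (simp add: sum_distrib_right)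
    also have "\<dots> \<le> Z * norm (K (Complex x a))"
      unfolding Z_def using assms(3)
      by (intro mult_right_mono sum_le_suminf summable_Suc_powr) auto
    finally show ?thesis .
  qed
  have pointwise: "(\<lambda>N. \<Sum>n<N. g n x) \<longlonglongrightarrow> zeta (Complex (\<sigma> - a) (t + x)) * K (Complex x a)" for x
    using sums_mult2[OF zeta_sums, of "Complex (\<sigma> - a) (t + x)" "K (Complex x a)"] assms(3)
    unfolding sums_def g_def by simp
  note limit = dominated_convergence[where f="\<lambda>N x. \<Sum>n<N. g n x" and S=UNIV,
      OF partial dominant dominated pointwise]
  have "integral UNIV (\<lambda>x. \<Sum>n<N. g n x) = (\<Sum>n<N. F n)" for N
    using g_integral by (intro integral_unique has_integral_sum) auto
  then have "F sums integral UNIV (\<lambda>x. zeta (Complex (\<sigma> - a) (t + x)) * K (Complex x a))"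
    using limit(2) by (simp add: sums_def)
  then have "(\<Sum>n. F n) = integral UNIV (\<lambda>x. zeta (Complex (\<sigma> - a) (t + x)) * K (Complex x a))"
    by (rule sums_unique[symmetric])
  then show ?thesis
    unfolding F_def[symmetric] using limit(1) by (simp add: has_integral_integral)
qed

lemma rectpath_Cauchy_integral_formula:
  assumes hol: "h holomorphic_on horizontal_strip a b"
    and w: "w \<in> box (Complex lo a) (Complex hi b)"
  shows "((\<lambda>u. h u / (u - w)) has_contour_integral 2 * pi * \<i> * h w) (rectpath (Complex lo a) (Complex hi b))"
proof -
  have "lo \<le> hi" "a \<le> b"
    using w by (auto simp: in_box_complex_iff)
  have "box (Complex lo a) (Complex hi b) \<subseteq> horizontal_strip a b"
    by (auto simp: horizontal_strip_def in_box_complex_iff)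
  then have "w \<in> interior (horizontal_strip a b)"
    using interior_maximal[OF _ open_box] w by blast
  moreover have "path_image (rectpath (Complex lo a) (Complex hi b)) \<subseteq> horizontal_strip a b - {w}"
    using path_image_rectpath_subset_horizontal_strip[OF \<open>lo \<le> hi\<close> \<open>a \<le> b\<close>]
      path_image_rectpath_inter_box[of "Complex lo a" "Complex hi b"] w \<open>lo \<le> hi\<close> \<open>a \<le> b\<close>
    by auto
  ultimately have "((\<lambda>u. h u / (u - w)) has_contour_integral
      2 * pi * \<i> * winding_number (rectpath (Complex lo a) (Complex hi b)) w * h w)
      (rectpath (Complex lo a) (Complex hi b))"
    by (intro Cauchy_integral_formula_convex_simple[OF convex_horizontal_strip hol]) auto
  then show ?thesis
    using winding_number_rectpath[OF w] by simp
qed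

lemma rectpath_integral_zeta_kernel:
  fixes K :: "complex \<Rightarrow> complex"
  assumes "0 < \<sigma>" "\<sigma> < 1" "a < \<sigma> - 1" "lo < -t" "-t < hi"
    and holK: "K holomorphic_on horizontal_strip a 0"
  shows "((\<lambda>u. zeta (Complex \<sigma> t + \<i> * u) * K u) has_contour_integral
           2 * of_real pi * K (Complex (-t) (\<sigma> - 1))) (rectpath (Complex lo a) (Complex hi 0))"
proof -
  define u0 where "u0 = Complex (-t) (\<sigma> - 1)"
  define h where "h u = K u * zeta_regular (Complex \<sigma> t + \<i> * u)" for u
  have shift_minus_1: "Complex \<sigma> t + \<i> * u - 1 = \<i> * (u - u0)" for u
    by (simp add: u0_def complex_eq_iff)
  have "(zeta_regular \<circ> (\<lambda>u. Complex \<sigma> t + \<i> * u)) holomorphic_on horizontal_strip a 0"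
  proof (rule holomorphic_on_compose_gen[OF _ zeta_regular_holomorphic])
    show "(\<lambda>u. Complex \<sigma> t + \<i> * u) holomorphic_on horizontal_strip a 0"
      by (intro holomorphic_intros)
    show "(\<lambda>u. Complex \<sigma> t + \<i> * u) ` horizontal_strip a 0 \<subseteq> {s. Re s > 0}"
      using assms(1) by (auto simp: horizontal_strip_def)
  qed
  then have "h holomorphic_on horizontal_strip a 0"
    unfolding h_def o_def using holK by (intro holomorphic_intros) auto
  moreover have u0_box: "u0 \<in> box (Complex lo a) (Complex hi 0)"
    using assms by (auto simp: u0_def in_box_complex_iff)
  ultimately have "((\<lambda>u. h u / (u - u0)) has_contour_integral 2 * pi * \<i> * h u0)
      (rectpath (Complex lo a) (Complex hi 0))"
    by (rule rectpath_Cauchy_integral_formula)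
  moreover have "- \<i> * (2 * pi * \<i> * h u0) = 2 * of_real pi * K u0"
    using shift_minus_1[of u0] by (simp add: h_def)
  ultimately have "((\<lambda>u. - \<i> * (h u / (u - u0))) has_contour_integral 2 * of_real pi * K u0)
      (rectpath (Complex lo a) (Complex hi 0))"
    using has_contour_integral_lmul[of _ _ _ "- \<i>"] by metis
  then show ?thesis
    unfolding u0_def[symmetric]
  proof (rule has_contour_integral_eq)
    fix u assume "u \<in> path_image (rectpath (Complex lo a) (Complex hi 0))"
    moreover have "path_image (rectpath (Complex lo a) (Complex hi 0)) \<inter> box (Complex lo a) (Complex hi 0) = {}"
      using assms by (intro path_image_rectpath_inter_box) auto
    ultimately have "u \<noteq> u0"
      using u0_box by blast
    then have "Complex \<sigma> t + \<i> * u \<noteq> 1"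
      using shift_minus_1[of u] by auto
    then have "zeta (Complex \<sigma> t + \<i> * u) = zeta_regular (Complex \<sigma> t + \<i> * u) / (\<i> * (u - u0))"
      unfolding shift_minus_1[symmetric] by (rule zeta_eq_zeta_regular)
    then show "- \<i> * (h u / (u - u0)) = zeta (Complex \<sigma> t + \<i> * u) * K u"
      by (simp add: h_def divide_divide_eq_left[symmetric] mult.commute)
  qed
qed

lemma has_integral_zeta_kernel_shift:
  fixes K :: "complex \<Rightarrow> complex"
  assumes "1/2 \<le> \<sigma>" "\<sigma> < 1" "a < \<sigma> - 1"
    and holK: "K holomorphic_on horizontal_strip a 0"
    and decay: "\<And>x y. X \<le> \<bar>x\<bar> \<Longrightarrow> a \<le> y \<Longrightarrow> y \<le> 0 \<Longrightarrow> norm (K (Complex x y)) \<le> C / x\<^sup>2"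
    and line: "((\<lambda>x. zeta (Complex (\<sigma> - a) (t + x)) * K (Complex x a)) has_integral L) UNIV"
  shows "((\<lambda>x. zeta (Complex \<sigma> (t + x)) * K (of_real x)) has_integral
           L - 2 * of_real pi * K (Complex (-t) (\<sigma> - 1))) UNIV"
proof -
  define F where "F u = zeta (Complex \<sigma> t + \<i> * u) * K u" for u
  have F_line: "F (Complex x y) = zeta (Complex (\<sigma> - y) (t + x)) * K (Complex x y)" for x y
    by (simp add: F_def Complex_add_imaginary_mult)
  obtain M where "0 \<le> M" and M: "\<And>s. 1/2 \<le> Re s \<Longrightarrow> Re s \<le> \<bar>Im s\<bar> \<Longrightarrow> 1 \<le> \<bar>Im s\<bar> \<Longrightarrow>
      norm (zeta s) \<le> M * \<bar>Im s\<bar>"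
    using zeta_vertical_growth by blast
  have F_bound: "norm (F (Complex x y)) \<le> 2 * M * C / \<bar>x\<bar> ^ 1"
    if x: "max X (\<sigma> - a + \<bar>t\<bar> + 1) \<le> \<bar>x\<bar>" and y: "a \<le> y" "y \<le> 0" for x y
  proof -
    have "\<bar>x\<bar> \<le> \<bar>t + x\<bar> + \<bar>t\<bar>" "\<bar>t + x\<bar> \<le> \<bar>t\<bar> + \<bar>x\<bar>"
      using abs_triangle_ineq4[of "t + x" t] abs_triangle_ineq[of t x] by simp_all
    then have "\<sigma> - y \<le> \<bar>t + x\<bar>" "1 \<le> \<bar>t + x\<bar>"
      using x y assms(3) by auto
    then have "norm (zeta (Complex (\<sigma> - y) (t + x))) \<le> M * \<bar>t + x\<bar>"
      using M[of "Complex (\<sigma> - y) (t + x)"] y assms(1) by simp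
    also have "\<dots> \<le> M * (2 * \<bar>x\<bar>)"
      using \<open>\<bar>t + x\<bar> \<le> \<bar>t\<bar> + \<bar>x\<bar>\<close> x assms(1,3) \<open>0 \<le> M\<close> by (intro mult_left_mono) auto
    finally have "norm (F (Complex x y)) \<le> M * (2 * \<bar>x\<bar>) * (C / \<bar>x\<bar> ^ 2)"
      unfolding F_line norm_mult using decay[OF _ y] x \<open>0 \<le> M\<close> by (intro mult_mono) auto
    also have "\<dots> = 2 * M * C / \<bar>x\<bar> ^ 1"
      using x assms(1,3) by (simp add: power2_eq_square field_simps del: power2_abs abs_mult_self_eq)
    finally show ?thesis .
  qed
  have "((\<lambda>x. F (Complex x 0)) has_integral L - 2 * of_real pi * K (Complex (-t) (\<sigma> - 1))) UNIV"
  proof (rule has_integral_horizontal_strip_shift[where Rc = "\<bar>t\<bar> + 1"])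
    show "a < 0"
      using assms(2,3) by simp
    show "(F has_contour_integral 2 * of_real pi * K (Complex (-t) (\<sigma> - 1)))
        (rectpath (Complex lo a) (Complex hi 0))" if "lo \<le> - (\<bar>t\<bar> + 1)" "\<bar>t\<bar> + 1 \<le> hi" for lo hi
      unfolding F_def using that assms by (intro rectpath_integral_zeta_kernel) auto
    show "((\<lambda>x. F (Complex x a)) has_integral L) UNIV"
      using line by (simp add: F_line)
    show "\<exists>R. \<forall>x y. R \<le> \<bar>x\<bar> \<longrightarrow> a \<le> y \<longrightarrow> y \<le> 0 \<longrightarrow> norm (F (Complex x y)) \<le> e"
      if "e > 0" for e
      using horizontal_strip_uniform_decay[where X="max X (\<sigma> - a + \<bar>t\<bar> + 1)" and a=a and b=0
          and f=F and D="2 * M * C" and n=1, OF F_bound _ that] by simp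
  qed
  then show ?thesis
    by (simp add: F_line complex_of_real_def)
qed

theorem lemma1:
  fixes \<sigma> t :: real and K :: "complex \<Rightarrow> complex"
  assumes "1/2 \<le> \<sigma>" and "\<sigma> < 1"
    and "K analytic_on {z. \<sigma> - 2 \<le> Im z \<and> Im z \<le> 0}"
    and "\<exists>C X. \<forall>x y. X \<le> \<bar>x\<bar> \<longrightarrow> \<sigma> - 2 \<le> y \<longrightarrow> y \<le> 0 \<longrightarrow>
            norm (K (Complex x y)) \<le> C / \<bar>x\<bar>^2"
  shows "integral UNIV (\<lambda>u::real. zeta (Complex \<sigma> (t + u)) * K (complex_of_real u))
         = (\<Sum>n. fourier K (ln (real (Suc n))) * of_nat (Suc n) powr (- Complex \<sigma> t))
           - 2 * of_real pi * K (Complex (- t) (- (1 - \<sigma>)))"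
proof -
  have holK: "K holomorphic_on horizontal_strip (\<sigma> - 2) 0"
    using analytic_imp_holomorphic[OF assms(3)] by (simp add: horizontal_strip_def)
  obtain C X where decay: "\<And>x y. X \<le> \<bar>x\<bar> \<Longrightarrow> \<sigma> - 2 \<le> y \<Longrightarrow> y \<le> 0 \<Longrightarrow> norm (K (Complex x y)) \<le> C / x\<^sup>2"
    using assms(4) by auto
  have "((\<lambda>x. zeta (Complex (\<sigma> - (\<sigma> - 2)) (t + x)) * K (Complex x (\<sigma> - 2))) has_integral
      (\<Sum>n. fourier K (ln (real (Suc n))) * of_nat (Suc n) powr (- Complex \<sigma> t))) UNIV"
    using assms(1,2) by (intro has_integral_zeta_kernel_line[OF _ _ _ holK decay]) auto
  then have "((\<lambda>x. zeta (Complex \<sigma> (t + x)) * K (of_real x)) has_integral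
      (\<Sum>n. fourier K (ln (real (Suc n))) * of_nat (Suc n) powr (- Complex \<sigma> t))
        - 2 * of_real pi * K (Complex (-t) (\<sigma> - 1))) UNIV"
    using assms(1,2) by (intro has_integral_zeta_kernel_shift[OF _ _ _ holK decay]) auto
  then show ?thesis
    by (simp add: integral_unique)
qed

end
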